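(* Let $\mathcal{Q}\subset\mathbb{R}^2$ be a convex polygon and $Q\in\mathcal{Q}$ one of its vertices. Let $\delta>0$ and $\bar Q\in\mathbb{R}^2$ with $\|Q-\bar Q\|<\delta$. Suppose there is $r>0$ with $\|Q\|>r$ such that \[ \frac{\langle Q,Q-P_j\rangle}{\|Q\|\,\|Q-P_j\|}\ge\frac{\delta}{r} \] for all other vertices $P_j\in\mathcal{Q}\setminus\{Q\}$. Then $Q$ is $\delta$-locally maximally distant with respect to $\bar Q$.
   Context: A convex polygon is a finite set of points of $\mathbb{R}^2$, not all on one line, in convex position (its points are its vertices). For a vertex $Q$ of a convex polygon $\mathcal{Q}$ and $\bar Q\in\mathbb{R}^2$ with $\|Q-\bar Q\|<\delta$, $Q$ is called $\delta$-locally maximally distant with respect to $\bar Q$ if $\|Q\|>\|A\|$ for every $A$ in the intersection of the open disk of radius $\delta$ centered at $\bar Q$ with the interior of the convex hull of $\mathcal{Q}$. *)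

theory Defs
  imports "HOL-Analysis.Analysis"
begin

definition convex_polygon :: "(real^2) set \<Rightarrow> bool" where
  "convex_polygon P \<longleftrightarrow> finite P \<and> \<not> collinear P \<and>
     (\<forall>p\<in>P. p \<notin> convex hull (P - {p}))"

definition loc_max_distant :: "real \<Rightarrow> (real^2) set \<Rightarrow> real^2 \<Rightarrow> real^2 \<Rightarrow> bool" where
  "loc_max_distant \<delta> P Q Qbar \<longleftrightarrow>
     (\<forall>A \<in> ball Qbar \<delta> \<inter> interior (convex hull P). norm Q > norm A)"

end

theory Submission
  imports Defs
begin

text \<open>
  With \<open>c = \<delta> \<parallel>Q\<parallel> / r > \<delta>\<close>, every vertex \<open>x\<close> lies in the cone
  \<open>{x. c \<parallel>Q - x\<parallel> \<le> \<langle>Q, Q - x\<rangle>}\<close> with apex \<open>Q\<close>. This cone is convex, so it contains the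
  whole polygon. For a point \<open>A\<close> of the cone at distance \<open>d\<close> from \<open>Q\<close> we get
  \<open>\<parallel>A\<parallel>\<^sup>2 = \<parallel>Q\<parallel>\<^sup>2 - 2\<langle>Q, Q - A\<rangle> + d\<^sup>2 \<le> \<parallel>Q\<parallel>\<^sup>2 - d (2c - d)\<close>, which is smaller than
  \<open>\<parallel>Q\<parallel>\<^sup>2\<close> as soon as \<open>0 < d < 2c\<close>. Points of the \<open>\<delta>\<close>-disk around \<open>Qbar\<close> have
  \<open>d < 2\<delta> < 2c\<close>, and \<open>d > 0\<close> for interior points of the polygon because the cone, hence
  the polygon, lies in the half-plane \<open>\<langle>Q, x\<rangle> \<le> \<parallel>Q\<parallel>\<^sup>2\<close>, whose boundary contains \<open>Q\<close>.
\<close>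

lemma convex_sublevel_set:
  assumes "convex_on S f"
  shows "convex {x \<in> S. f x \<le> b}"
  unfolding convex_def
proof (intro ballI allI impI)
  fix x y and u v :: real
  assume x: "x \<in> {x \<in> S. f x \<le> b}" and y: "y \<in> {x \<in> S. f x \<le> b}"
    and uv: "0 \<le> u" "0 \<le> v" "u + v = 1"
  have "u *\<^sub>R x + v *\<^sub>R y \<in> S"
    using assms x y uv convex_on_imp_convex unfolding convex_def by blast
  moreover have "f (u *\<^sub>R x + v *\<^sub>R y) \<le> b"
    using convex_lower[OF assms _ _ uv] x y by fastforce
  ultimately show "u *\<^sub>R x + v *\<^sub>R y \<in> {x \<in> S. f x \<le> b}" by blast
qed

lemma convex_on_inner_left: "convex_on UNIV (\<lambda>x. a \<bullet> x)"
  by (simp add: convex_on_def inner_add_right)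

lemma convex_cone_at_apex:
  fixes Q :: "'a::real_inner" and c :: real
  assumes "c \<ge> 0"
  shows "convex {x. c * norm (Q - x) \<le> Q \<bullet> (Q - x)}"
proof -
  have "convex_on UNIV (\<lambda>x. c * dist Q x + Q \<bullet> x)"
    using assms convex_on_inner_left by (intro convex_on_add convex_on_cmul convex_on_dist) auto
  then have "convex {x \<in> UNIV. c * dist Q x + Q \<bullet> x \<le> Q \<bullet> Q}"
    by (rule convex_sublevel_set)
  moreover have "{x \<in> UNIV. c * dist Q x + Q \<bullet> x \<le> Q \<bullet> Q} = {x. c * norm (Q - x) \<le> Q \<bullet> (Q - x)}"
    by (auto simp: dist_norm inner_diff_right)
  ultimately show ?thesis by simp
qed

lemma apex_notin_interior_of_subset_cone:
  fixes Q :: "'a::euclidean_space"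
  assumes "S \<subseteq> {x. c * norm (Q - x) \<le> Q \<bullet> (Q - x)}" and "c \<ge> 0" and "Q \<noteq> 0"
  shows "Q \<notin> interior S"
proof -
  have "S \<subseteq> {x. Q \<bullet> x \<le> Q \<bullet> Q}"
  proof
    fix x assume "x \<in> S"
    then have "c * norm (Q - x) \<le> Q \<bullet> Q - Q \<bullet> x"
      using assms(1) by (auto simp: inner_diff_right)
    moreover have "0 \<le> c * norm (Q - x)"
      using assms(2) by simp
    ultimately show "x \<in> {x. Q \<bullet> x \<le> Q \<bullet> Q}"
      by simp
  qed
  then have "interior S \<subseteq> {x. Q \<bullet> x < Q \<bullet> Q}"
    using interior_mono interior_halfspace_le[OF assms(3)] by blast
  then show ?thesis
    by auto
qed

lemma subset_cone_of_angle_bound: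
  fixes P :: "'a::real_inner set"
  assumes "\<forall>x \<in> P - {Q}. k \<le> (Q \<bullet> (Q - x)) / (norm Q * norm (Q - x))" and "Q \<noteq> 0"
  shows "P \<subseteq> {x. k * norm Q * norm (Q - x) \<le> Q \<bullet> (Q - x)}"
proof
  fix x assume "x \<in> P"
  show "x \<in> {x. k * norm Q * norm (Q - x) \<le> Q \<bullet> (Q - x)}"
  proof (cases "x = Q")
    case False
    then have "norm Q * norm (Q - x) > 0"
      using assms(2) by simp
    moreover have "k \<le> (Q \<bullet> (Q - x)) / (norm Q * norm (Q - x))"
      using assms(1) \<open>x \<in> P\<close> False by blast
    ultimately show ?thesis
      by (simp add: pos_le_divide_eq mult.assoc)
  qed simp
qed

lemma norm_less_in_cone_near_apex:
  fixes Q A :: "'a::real_inner"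
  assumes cone: "c * norm (Q - A) \<le> Q \<bullet> (Q - A)"
    and near: "0 < norm (Q - A)" "norm (Q - A) < 2 * c"
  shows "norm A < norm Q"
proof -
  define d where "d = norm (Q - A)"
  have "(norm A)\<^sup>2 = (norm Q)\<^sup>2 - 2 * (Q \<bullet> (Q - A)) + d\<^sup>2"
    unfolding d_def by (simp add: power2_norm_eq_inner inner_diff_left inner_diff_right inner_commute)
  also have "\<dots> \<le> (norm Q)\<^sup>2 - d * (2 * c - d)"
    using cone unfolding d_def by (simp add: power2_eq_square algebra_simps)
  also have "\<dots> < (norm Q)\<^sup>2"
    using near unfolding d_def by simp
  finally show ?thesis
    using power_less_imp_less_base by fastforce
qed

theorem lemma5p12:
  fixes P :: "(real^2) set" and Q Qbar :: "real^2" and \<delta> r :: real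
  assumes "convex_polygon P" and "Q \<in> P"
    and "\<delta> > 0" and "norm (Q - Qbar) < \<delta>"
    and "r > 0" and "norm Q > r"
    and "\<forall>Pj \<in> P - {Q}. (Q \<bullet> (Q - Pj)) / (norm Q * norm (Q - Pj)) \<ge> \<delta> / r"
  shows "loc_max_distant \<delta> P Q Qbar"
proof -
  define c where "c = \<delta> / r * norm Q"
  let ?cone = "{x. c * norm (Q - x) \<le> Q \<bullet> (Q - x)}"
  have "\<delta> < c" and "Q \<noteq> 0"
    using assms(3,5,6) by (auto simp: c_def field_simps)
  have "P \<subseteq> ?cone"
    using subset_cone_of_angle_bound[OF assms(7) \<open>Q \<noteq> 0\<close>] by (simp add: c_def)
  then have hull_cone: "convex hull P \<subseteq> ?cone"
    using \<open>\<delta> < c\<close> assms(3) by (simp add: hull_minimal convex_cone_at_apex)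
  have "Q \<notin> interior (convex hull P)"
    using apex_notin_interior_of_subset_cone[OF hull_cone] \<open>\<delta> < c\<close> assms(3) \<open>Q \<noteq> 0\<close> by simp
  show ?thesis
    unfolding loc_max_distant_def
  proof
    fix A assume A: "A \<in> ball Qbar \<delta> \<inter> interior (convex hull P)"
    then have "0 < norm (Q - A)"
      using \<open>Q \<notin> interior (convex hull P)\<close> by auto
    moreover have "norm (Q - A) < 2 * c"
      using A assms(4) \<open>\<delta> < c\<close> norm_triangle_lt[of "Q - Qbar" "Qbar - A"] by (simp add: dist_norm)
    ultimately show "norm A < norm Q"
      using A hull_cone interior_subset norm_less_in_cone_near_apex by fastforce
  qed
qed

end
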